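(* If $X$ is a Banach space such that $X$ or $X^*$ has property $(\alpha)$, then $X$ satisfies property $(A_d)$ for every integer $d\ge2$.
   Context: Let $(r_i)$ be independent Rademacher variables on $(\Omega_0,\mathbb{P})$; $\mathrm{Rad}(Z)$ is the closure in $L^2(\Omega_0;Z)$ of finite sums $\sum r_i\otimes z_i$. Property $(\alpha)$: there is $C$ with $\|\sum_{i,j\le n}a_{ij}r_i\otimes r_j\otimes x_{ij}\|_{\mathrm{Rad}(\mathrm{Rad}(X))}\le C\sup|a_{ij}|\,\|\sum_{i,j\le n}r_i\otimes r_j\otimes x_{ij}\|_{\mathrm{Rad}(\mathrm{Rad}(X))}$ for all $n$, complex $a_{ij}$ and $x_{ij}\in X$. For a finite family $(x_{i_1,\ldots,i_d})$ in $Z$, $N_d([x_{i_1,\ldots,i_d}])=\left(\int_{\Omega_0^d}\|\sum r_{i_1}(t_1)\cdots r_{i_d}(t_d)x_{i_1,\ldots,i_d}\|^2d\mathbb{P}^d\right)^{1/2}$. $X$ has property $(A_d)$ if there is $C>0$ with $|\sum a_{i_1,\ldots,i_d}\langle x^*_{i_1,\ldots,i_d},x_{i_1,\ldots,i_d}\rangle|\le C\sup|a_{i_1,\ldots,i_d}|\,N_d([x_{i_1,\ldots,i_d}])\,N_d([x^*_{i_1,\ldots,i_d}])$ for all finite families of scalars, $x_{i_1,\ldots,i_d}\in X$, $x^*_{i_1,\ldots,i_d}\in X^*$. *)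

theory Defs
  imports "HOL-Analysis.Analysis"
begin

text \<open>A complex Banach space X is a real Banach space (type 'a) together with the
  operator J = multiplication by i.  The norm must be compatible with complex scalars,
  i.e. norm (exp(i t) x) = norm x.\<close>

definition complex_structure :: "('a::real_normed_vector \<Rightarrow> 'a) \<Rightarrow> bool" where
  "complex_structure J \<longleftrightarrow> linear J \<and> (\<forall>x. J (J x) = - x) \<and>
     (\<forall>t x. norm (cos t *\<^sub>R x + sin t *\<^sub>R J x) = norm x)"

definition scC :: "('a::real_vector \<Rightarrow> 'a) \<Rightarrow> complex \<Rightarrow> 'a \<Rightarrow> 'a" where
  "scC J c x = Re c *\<^sub>R x + Im c *\<^sub>R J x"

text \<open>The complex dual X* is identified (isometrically, as a real Banach space) with the
  real dual 'a \<Rightarrow>L real via f \<mapsto> Re o f.  Multiplication by i on X* becomes g \<mapsto> g o J,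
  and the complex duality pairing is  f(x) = g x - i g(J x).\<close>
definition dualJ :: "('a::real_normed_vector \<Rightarrow> 'a) \<Rightarrow> ('a \<Rightarrow>\<^sub>L real) \<Rightarrow> ('a \<Rightarrow>\<^sub>L real)" where
  "dualJ J g = Blinfun (\<lambda>x. g (J x))"

definition cpair :: "('a::real_normed_vector \<Rightarrow> 'a) \<Rightarrow> ('a \<Rightarrow>\<^sub>L real) \<Rightarrow> 'a \<Rightarrow> complex" where
  "cpair J g x = Complex (g x) (- g (J x))"

definition idx :: "nat \<Rightarrow> nat \<Rightarrow> nat list set" where
  "idx d n = {is. length is = d \<and> set is \<subseteq> {..<n}}"

text \<open>Sign patterns: the values (r_i(t_k))_{k<d, i<n}; the random vector is uniformly
  distributed on this finite set.\<close>
definition signs :: "nat \<Rightarrow> nat \<Rightarrow> (nat \<Rightarrow> nat \<Rightarrow> real) set" where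
  "signs d n = PiE {..<d} (\<lambda>_. PiE {..<n} (\<lambda>_. {-1, 1}))"

text \<open>N_d of the family (x_is)_{is \<in> idx d n}: the L^2(\<Omega>_0^d) norm of
  \<Sum> r_{i_1}(t_1)...r_{i_d}(t_d) x_{i_1...i_d}, computed as the exact finite average.\<close>
definition Nd :: "nat \<Rightarrow> nat \<Rightarrow> (nat list \<Rightarrow> 'a::real_normed_vector) \<Rightarrow> real" where
  "Nd d n x = sqrt ((\<Sum>\<epsilon>\<in>signs d n.
       (norm (\<Sum>is\<in>idx d n. (\<Prod>k<d. \<epsilon> k (is ! k)) *\<^sub>R x is))\<^sup>2) / real (card (signs d n)))"

text \<open>Property (alpha) for a complex normed space with complex scalar multiplication sc.
  The Rad(Rad(Z)) norm of \<Sum> r_i \<otimes> r_j \<otimes> x_ij equals N_2([x_ij]).\<close>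
definition property_alpha :: "(complex \<Rightarrow> 'b::real_normed_vector \<Rightarrow> 'b) \<Rightarrow> bool" where
  "property_alpha sc \<longleftrightarrow> (\<exists>C. \<forall>n (a :: nat list \<Rightarrow> complex) (x :: nat list \<Rightarrow> 'b).
      Nd 2 n (\<lambda>is. sc (a is) (x is)) \<le> C * (MAX is\<in>idx 2 n. cmod (a is)) * Nd 2 n x)"

definition property_A :: "('a::real_normed_vector \<Rightarrow> 'a) \<Rightarrow> nat \<Rightarrow> bool" where
  "property_A J d \<longleftrightarrow> (\<exists>C>0. \<forall>n (a :: nat list \<Rightarrow> complex) (x :: nat list \<Rightarrow> 'a) (xs :: nat list \<Rightarrow> ('a \<Rightarrow>\<^sub>L real)).
      cmod (\<Sum>is\<in>idx d n. a is * cpair J (xs is) (x is))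
        \<le> C * (MAX is\<in>idx d n. cmod (a is)) * Nd d n x * Nd d n xs)"

end

theory Submission
  imports Defs
begin

text \<open>
  For a sign pattern \<open>\<epsilon>\<close> the Walsh functions \<open>W\<^sub>l(\<epsilon>) = \<epsilon>\<^sub>1(l\<^sub>1)\<cdots>\<epsilon>\<^sub>d(l\<^sub>d)\<close> of the
  multi-indices \<open>l\<close> are orthonormal, so averaging the pairing of \<open>\<Sum>\<^sub>l W\<^sub>l(\<epsilon>) x\<^sup>*\<^sub>l\<close> with
  \<open>\<Sum>\<^sub>l W\<^sub>l(\<epsilon>) x\<^sub>l\<close> over \<open>\<epsilon>\<close> gives \<open>\<Sum>\<^sub>l \<langle>x\<^sup>*\<^sub>l, x\<^sub>l\<rangle>\<close>, and Cauchy-Schwarz bounds it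
  by \<open>N\<^sub>d(x\<^sup>*) N\<^sub>d(x)\<close>. Hence \<open>(A\<^sub>d)\<close> holds as soon as multiplication by bounded scalars
  \<open>a\<^sub>l\<close> is bounded for \<open>N\<^sub>d\<close> on \<open>X\<close> or on \<open>X\<^sup>*\<close>.

  Averaging \<open>(\<alpha>)\<close> over random signs on the pairs \<open>(i, j)\<close> shows that the Rad(Rad) norm of a
  double family is equivalent to its Rad norm over the product index set. Peeling off one
  index at a time, \<open>N\<^sub>d\<close> becomes equivalent to the Rad norm over all \<open>d\<close>-fold multi-indices,
  and on that norm bounded multipliers act boundedly, again by \<open>(\<alpha>)\<close>.
\<close>

section \<open>Averages over sign vectors\<close>

definition avg :: "'a set \<Rightarrow> ('a \<Rightarrow> real) \<Rightarrow> real" where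
  "avg S f = (\<Sum>s\<in>S. f s) / real (card S)"

lemma avg_cong: "(\<And>s. s \<in> S \<Longrightarrow> f s = g s) \<Longrightarrow> avg S f = avg S g"
  unfolding avg_def by (metis sum.cong)

lemma avg_mono: "(\<And>s. s \<in> S \<Longrightarrow> f s \<le> g s) \<Longrightarrow> avg S f \<le> avg S g"
  unfolding avg_def by (intro divide_right_mono sum_mono) auto

lemma avg_mult_left: "avg S (\<lambda>s. c * f s) = c * avg S f"
  unfolding avg_def by (simp add: sum_distrib_left)

lemma avg_const: "finite S \<Longrightarrow> S \<noteq> {} \<Longrightarrow> avg S (\<lambda>_. c) = c"
  unfolding avg_def by simp

lemma avg_reindex: "bij_betw h A B \<Longrightarrow> avg B f = avg A (\<lambda>a. f (h a))"
  unfolding avg_def by (simp add: sum.reindex_bij_betw bij_betw_same_card)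

lemma avg_Times:
  assumes "finite A" "finite B"
  shows "avg (A \<times> B) f = avg A (\<lambda>a. avg B (\<lambda>b. f (a, b)))"
  unfolding avg_def using assms
  by (simp add: sum.cartesian_product card_cartesian_product sum_divide_distrib[symmetric]
      divide_divide_eq_left mult.commute)

lemma avg_swap:
  assumes "finite A" "finite B"
  shows "avg A (\<lambda>a. avg B (\<lambda>b. f a b)) = avg B (\<lambda>b. avg A (\<lambda>a. f a b))"
  unfolding avg_def
  by (simp add: sum_divide_distrib[symmetric] divide_divide_eq_left mult.commute sum.swap[of _ A B])

definition sign_vectors :: "'i set \<Rightarrow> ('i \<Rightarrow> real) set" where
  "sign_vectors I = PiE I (\<lambda>_. {-1, 1})"

lemma finite_sign_vectors: "finite I \<Longrightarrow> finite (sign_vectors I)"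
  unfolding sign_vectors_def by (intro finite_PiE) auto

lemma sign_vectors_nonempty: "sign_vectors I \<noteq> {}"
  unfolding sign_vectors_def by (simp add: PiE_eq_empty_iff)

lemma avg_sign_vectors_const: "finite I \<Longrightarrow> avg (sign_vectors I) (\<lambda>_. c) = c"
  by (simp add: avg_const finite_sign_vectors sign_vectors_nonempty)

lemma sign_vectors_iff: "\<eta> \<in> sign_vectors I \<longleftrightarrow> \<eta> \<in> extensional I \<and> (\<forall>i\<in>I. \<bar>\<eta> i\<bar> = 1)"
  unfolding sign_vectors_def PiE_def by (auto simp: Pi_def abs_if)

lemma sign_vector_abs: "\<eta> \<in> sign_vectors I \<Longrightarrow> i \<in> I \<Longrightarrow> \<bar>\<eta> i\<bar> = 1"
  by (simp add: sign_vectors_iff)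

lemma sign_vector_mult_self: "\<eta> \<in> sign_vectors I \<Longrightarrow> i \<in> I \<Longrightarrow> \<eta> i * \<eta> i = 1"
  by (metis abs_mult_self_eq mult_1 sign_vector_abs)

lemma avg_sign_vectors_insert:
  assumes "finite B" "b \<notin> B"
  shows "avg (sign_vectors (insert b B)) f = avg {-1, 1} (\<lambda>y. avg (sign_vectors B) (\<lambda>e. f (e(b := y))))"
proof -
  have "bij_betw (\<lambda>(y, e). e(b := y)) ({-1, 1} \<times> sign_vectors B) (sign_vectors (insert b B))"
    unfolding sign_vectors_def
    using assms PiE_insert_eq[of b B "\<lambda>_. {-1,1::real}"] inj_combinator[of b B "\<lambda>_. {-1,1::real}"]
    by (simp add: bij_betw_def)
  then show ?thesis
    using assms by (simp add: avg_reindex avg_Times finite_sign_vectors)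
qed

lemma avg_sign_vectors_restrict:
  assumes "finite B" "A \<subseteq> B"
  shows "avg (sign_vectors B) (\<lambda>e. h (restrict e A)) = avg (sign_vectors A) h"
proof -
  have "avg (sign_vectors (A \<union> D)) (\<lambda>e. h (restrict e A)) = avg (sign_vectors A) h"
    if "finite D" "A \<inter> D = {}" for D
    using that
  proof (induction D rule: finite_induct)
    case empty
    have "avg (sign_vectors A) (\<lambda>e. h (restrict e A)) = avg (sign_vectors A) h"
      by (intro avg_cong arg_cong[where f = h]) (auto simp: sign_vectors_def PiE_restrict)
    then show ?case
      by (simp only: Un_empty_right)
  next
    case (insert b D)
    have fin: "finite (A \<union> D)"
      using assms insert.hyps finite_subset by blast
    have b: "b \<notin> A \<union> D"
      using insert by blast
    have restrict_upd: "restrict (e(b := y)) A = restrict e A" for e y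
      using b by (auto simp: fun_eq_iff)
    have "avg (sign_vectors (A \<union> insert b D)) (\<lambda>e. h (restrict e A))
        = avg {-1, 1} (\<lambda>y. avg (sign_vectors (A \<union> D)) (\<lambda>e. h (restrict (e(b := y)) A)))"
      using avg_sign_vectors_insert[OF fin b] by simp
    also have "\<dots> = avg {-1, 1::real} (\<lambda>y. avg (sign_vectors A) h)"
    proof -
      have "avg (sign_vectors (A \<union> D)) (\<lambda>e. h (restrict e A)) = avg (sign_vectors A) h"
        using insert.IH insert.prems by blast
      then show ?thesis
        by (simp only: restrict_upd)
    qed
    also have "\<dots> = avg (sign_vectors A) h"
      by (simp add: avg_const)
    finally show ?case .
  qed
  from this[of "B - A"] show ?thesis
    using assms by (simp add: Un_absorb1)
qed

lemma sign_vectors_comp_bij: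
  assumes "inj_on f A"
  shows "bij_betw (\<lambda>e. restrict (e \<circ> f) A) (sign_vectors (f ` A)) (sign_vectors A)"
proof (rule bij_betwI[where g = "\<lambda>\<eta>. restrict (\<eta> \<circ> the_inv_into A f) (f ` A)"])
  show "(\<lambda>e. restrict (e \<circ> f) A) \<in> sign_vectors (f ` A) \<rightarrow> sign_vectors A"
    by (auto simp: sign_vectors_def PiE_iff)
  show "(\<lambda>\<eta>. restrict (\<eta> \<circ> the_inv_into A f) (f ` A)) \<in> sign_vectors A \<rightarrow> sign_vectors (f ` A)"
    using assms by (auto simp: sign_vectors_def PiE_iff the_inv_into_f_f)
qed (use assms in \<open>auto simp: sign_vectors_def PiE_iff the_inv_into_f_f extensional_def fun_eq_iff\<close>)

lemma avg_sign_vectors_comp: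
  assumes "finite B" "inj_on f A" "f ` A \<subseteq> B"
  shows "avg (sign_vectors B) (\<lambda>e. h (restrict (e \<circ> f) A)) = avg (sign_vectors A) h"
proof -
  have "avg (sign_vectors B) (\<lambda>e. h (restrict (e \<circ> f) A))
      = avg (sign_vectors B) (\<lambda>e. (\<lambda>e'. h (restrict (e' \<circ> f) A)) (restrict e (f ` A)))"
    by (intro avg_cong arg_cong[where f = h]) (auto simp: fun_eq_iff)
  also have "\<dots> = avg (sign_vectors (f ` A)) (\<lambda>e'. h (restrict (e' \<circ> f) A))"
    using assms by (intro avg_sign_vectors_restrict) auto
  also have "\<dots> = avg (sign_vectors A) h"
    using avg_reindex[OF sign_vectors_comp_bij[OF assms(2)], of h] by simp
  finally show ?thesis .
qed

lemma sign_vectors_mult_bij: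
  assumes "\<tau> \<in> sign_vectors K"
  shows "bij_betw (\<lambda>\<eta>. restrict (\<lambda>k. \<eta> k * \<tau> k) K) (sign_vectors K) (sign_vectors K)"
proof -
  define \<phi> where "\<phi> \<eta> = restrict (\<lambda>k. \<eta> k * \<tau> k) K" for \<eta> :: "_ \<Rightarrow> real"
  have maps: "\<phi> \<in> sign_vectors K \<rightarrow> sign_vectors K"
    using assms by (auto simp: \<phi>_def sign_vectors_iff abs_mult)
  have involution: "\<phi> (\<phi> \<eta>) = \<eta>" if "\<eta> \<in> sign_vectors K" for \<eta>
    using that sign_vector_mult_self[OF assms]
    by (auto simp: \<phi>_def sign_vectors_iff extensional_def fun_eq_iff mult.assoc)
  have "bij_betw \<phi> (sign_vectors K) (sign_vectors K)"
    by (rule bij_betwI[where g = \<phi>, OF maps maps involution involution])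
  then show ?thesis
    unfolding \<phi>_def .
qed

lemma sum_sign_vectors_mult:
  assumes "i \<in> I" "j \<in> I"
  shows "(\<Sum>e\<in>sign_vectors I. e i * e j) = (if i = j then real (card (sign_vectors I)) else 0)"
proof (cases "i = j")
  case True
  have "(\<Sum>e\<in>sign_vectors I. e i * e i) = (\<Sum>e\<in>sign_vectors I. 1)"
    using assms by (intro sum.cong) (auto simp: sign_vector_mult_self)
  then show ?thesis
    using True by simp
next
  case False
  define flip where "flip e = e(i := - e i)" for e :: "_ \<Rightarrow> real"
  have "bij_betw flip (sign_vectors I) (sign_vectors I)"
    by (rule bij_betwI[where g = flip])
       (use assms in \<open>auto simp: flip_def sign_vectors_iff extensional_def\<close>)
  then have "(\<Sum>e\<in>sign_vectors I. e i * e j) = (\<Sum>e\<in>sign_vectors I. flip e i * flip e j)"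
    by (rule sum.reindex_bij_betw[symmetric])
  also have "\<dots> = - (\<Sum>e\<in>sign_vectors I. e i * e j)"
    using False by (simp add: flip_def sum_negf)
  finally show ?thesis
    using False by simp
qed

section \<open>Rademacher norms\<close>

definition rad_sq :: "'i set \<Rightarrow> ('i \<Rightarrow> 'b::real_normed_vector) \<Rightarrow> real" where
  "rad_sq I u = avg (sign_vectors I) (\<lambda>\<eta>. (norm (\<Sum>i\<in>I. \<eta> i *\<^sub>R u i))\<^sup>2)"

definition rad2_sq :: "'i set \<Rightarrow> 'j set \<Rightarrow> ('i \<Rightarrow> 'j \<Rightarrow> 'b::real_normed_vector) \<Rightarrow> real" where
  "rad2_sq I J v = avg (sign_vectors I) (\<lambda>\<epsilon>. avg (sign_vectors J) (\<lambda>\<delta>.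
     (norm (\<Sum>i\<in>I. \<Sum>j\<in>J. (\<epsilon> i * \<delta> j) *\<^sub>R v i j))\<^sup>2))"

lemma rad_sq_cong: "(\<And>i. i \<in> I \<Longrightarrow> u i = u' i) \<Longrightarrow> rad_sq I u = rad_sq I u'"
  unfolding rad_sq_def by (intro avg_cong) (simp cong: sum.cong)

lemma rad2_sq_cong: "(\<And>i j. i \<in> I \<Longrightarrow> j \<in> J \<Longrightarrow> v i j = v' i j) \<Longrightarrow> rad2_sq I J v = rad2_sq I J v'"
  unfolding rad2_sq_def by (intro avg_cong) (simp cong: sum.cong)

lemma rad_sq_singleton: "rad_sq {i} u = (norm (u i))\<^sup>2"
proof -
  have "rad_sq {i} u = avg (sign_vectors {i}) (\<lambda>\<eta>. (norm (u i))\<^sup>2)"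
    unfolding rad_sq_def by (intro avg_cong) (simp add: sign_vector_abs)
  then show ?thesis
    by (simp add: avg_sign_vectors_const)
qed

lemma rad_sq_reindex:
  assumes "inj_on f A"
  shows "rad_sq (f ` A) u = rad_sq A (\<lambda>a. u (f a))"
proof -
  have "rad_sq A (\<lambda>a. u (f a))
      = avg (sign_vectors (f ` A)) (\<lambda>e. (norm (\<Sum>a\<in>A. restrict (e \<circ> f) A a *\<^sub>R u (f a)))\<^sup>2)"
    unfolding rad_sq_def by (rule avg_reindex[OF sign_vectors_comp_bij[OF assms]])
  also have "\<dots> = rad_sq (f ` A) u"
    unfolding rad_sq_def by (intro avg_cong) (simp add: sum.reindex[OF assms])
  finally show ?thesis ..
qed

lemma rad_sq_sign_flip:
  assumes "\<tau> \<in> sign_vectors K"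
  shows "avg (sign_vectors K) (\<lambda>\<eta>. (norm (\<Sum>k\<in>K. (\<eta> k * \<tau> k) *\<^sub>R u k))\<^sup>2) = rad_sq K u"
proof -
  have "rad_sq K u = avg (sign_vectors K)
      (\<lambda>\<eta>. (norm (\<Sum>k\<in>K. restrict (\<lambda>k. \<eta> k * \<tau> k) K k *\<^sub>R u k))\<^sup>2)"
    unfolding rad_sq_def by (rule avg_reindex[OF sign_vectors_mult_bij[OF assms]])
  also have "\<dots> = avg (sign_vectors K) (\<lambda>\<eta>. (norm (\<Sum>k\<in>K. (\<eta> k * \<tau> k) *\<^sub>R u k))\<^sup>2)"
    by (intro avg_cong) (simp cong: sum.cong)
  finally show ?thesis ..
qed

lemma rad2_sq_eq_avg_rad_sq:
  "rad2_sq I J v = avg (sign_vectors I) (\<lambda>\<epsilon>. rad_sq J (\<lambda>j. \<Sum>i\<in>I. \<epsilon> i *\<^sub>R v i j))"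
proof -
  have "(\<Sum>i\<in>I. \<Sum>j\<in>J. (\<epsilon> i * \<delta> j) *\<^sub>R v i j) = (\<Sum>j\<in>J. \<delta> j *\<^sub>R (\<Sum>i\<in>I. \<epsilon> i *\<^sub>R v i j))"
    for \<epsilon> \<delta> :: "_ \<Rightarrow> real"
    by (subst sum.swap) (simp add: scaleR_sum_right mult.commute)
  then show ?thesis
    unfolding rad2_sq_def rad_sq_def by simp
qed

lemma rad2_sq_singleton: "rad2_sq I {j} v = rad_sq I (\<lambda>i. v i j)"
proof -
  have "rad2_sq I {j} v = avg (sign_vectors I) (\<lambda>\<epsilon>. (norm (\<Sum>i\<in>I. \<epsilon> i *\<^sub>R v i j))\<^sup>2)"
    unfolding rad2_sq_eq_avg_rad_sq rad_sq_singleton ..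
  then show ?thesis
    unfolding rad_sq_def .
qed

lemma rad2_sq_embed:
  assumes fin: "finite I'" "finite J'" and inj: "inj_on f I" "inj_on g J"
    and sub: "f ` I \<subseteq> I'" "g ` J \<subseteq> J'"
    and w_eq: "\<And>i j. i \<in> I \<Longrightarrow> j \<in> J \<Longrightarrow> w (f i) (g j) = v i j"
    and w_0: "\<And>i' j'. (i', j') \<notin> f ` I \<times> g ` J \<Longrightarrow> w i' j' = 0"
  shows "rad2_sq I' J' w = rad2_sq I J v"
proof -
  define F where "F \<epsilon> \<delta> = (norm (\<Sum>i\<in>I. \<Sum>j\<in>J. (\<epsilon> i * \<delta> j) *\<^sub>R v i j))\<^sup>2"
    for \<epsilon> \<delta> :: "_ \<Rightarrow> real"
  have "(\<Sum>i'\<in>I'. \<Sum>j'\<in>J'. (\<epsilon> i' * \<delta> j') *\<^sub>R w i' j')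
      = (\<Sum>i'\<in>I'. \<Sum>j'\<in>g ` J. (\<epsilon> i' * \<delta> j') *\<^sub>R w i' j')" for \<epsilon> \<delta> :: "_ \<Rightarrow> real"
    using fin sub w_0 by (intro sum.cong refl sum.mono_neutral_right) auto
  also have "\<dots> \<epsilon> \<delta> = (\<Sum>i'\<in>f ` I. \<Sum>j'\<in>g ` J. (\<epsilon> i' * \<delta> j') *\<^sub>R w i' j')"
    for \<epsilon> \<delta> :: "_ \<Rightarrow> real"
    using fin sub w_0 by (intro sum.mono_neutral_right ballI sum.neutral) auto
  also have "\<dots> \<epsilon> \<delta> = (\<Sum>i\<in>I. \<Sum>j\<in>J. (restrict (\<epsilon> \<circ> f) I i * restrict (\<delta> \<circ> g) J j) *\<^sub>R v i j)"
    for \<epsilon> \<delta> :: "_ \<Rightarrow> real"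
    using w_eq by (simp add: sum.reindex[OF inj(1)] sum.reindex[OF inj(2)])
  finally have "rad2_sq I' J' w = avg (sign_vectors I') (\<lambda>\<epsilon>. avg (sign_vectors J') (\<lambda>\<delta>.
      F (restrict (\<epsilon> \<circ> f) I) (restrict (\<delta> \<circ> g) J)))"
    unfolding rad2_sq_def F_def by simp
  also have "\<dots> = avg (sign_vectors I') (\<lambda>\<epsilon>. avg (sign_vectors J) (F (restrict (\<epsilon> \<circ> f) I)))"
    using fin inj sub by (intro avg_cong avg_sign_vectors_comp) auto
  also have "\<dots> = avg (sign_vectors I) (\<lambda>\<epsilon>. avg (sign_vectors J) (F \<epsilon>))"
    using fin inj sub by (intro avg_sign_vectors_comp) auto
  finally show ?thesis
    unfolding rad2_sq_def F_def .
qed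

lemma avg_rad2_sq_random_signs:
  assumes I: "finite I" and J: "finite J"
  shows "avg (sign_vectors (I \<times> J)) (\<lambda>\<sigma>. rad2_sq I J (\<lambda>i j. \<sigma> (i, j) *\<^sub>R v i j))
       = rad_sq (I \<times> J) (\<lambda>(i, j). v i j)"
proof -
  have "avg (sign_vectors (I \<times> J)) (\<lambda>\<sigma>. rad2_sq I J (\<lambda>i j. \<sigma> (i, j) *\<^sub>R v i j))
     = avg (sign_vectors I) (\<lambda>\<epsilon>. avg (sign_vectors J) (\<lambda>\<delta>. avg (sign_vectors (I \<times> J)) (\<lambda>\<sigma>.
          (norm (\<Sum>i\<in>I. \<Sum>j\<in>J. (\<epsilon> i * \<delta> j) *\<^sub>R (\<sigma> (i, j) *\<^sub>R v i j)))\<^sup>2)))"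
    unfolding rad2_sq_def using assms
    by (simp add: finite_sign_vectors avg_swap[of "sign_vectors (I \<times> J)" "sign_vectors I"]
        avg_swap[of "sign_vectors (I \<times> J)" "sign_vectors J"])
  also have "\<dots> = avg (sign_vectors I) (\<lambda>\<epsilon>. avg (sign_vectors J) (\<lambda>\<delta>. rad_sq (I \<times> J) (\<lambda>(i, j). v i j)))"
  proof (intro avg_cong)
    fix \<epsilon> \<delta> assume \<epsilon>: "\<epsilon> \<in> sign_vectors I" and \<delta>: "\<delta> \<in> sign_vectors J"
    define \<tau> where "\<tau> = restrict (\<lambda>(i, j). \<epsilon> i * \<delta> j) (I \<times> J)"
    have \<tau>: "\<tau> \<in> sign_vectors (I \<times> J)"
      using \<epsilon> \<delta> unfolding \<tau>_def by (auto simp: sign_vectors_iff abs_mult)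
    have "(\<Sum>i\<in>I. \<Sum>j\<in>J. (\<epsilon> i * \<delta> j) *\<^sub>R (\<sigma> (i, j) *\<^sub>R v i j))
        = (\<Sum>p\<in>I \<times> J. (\<sigma> p * \<tau> p) *\<^sub>R (\<lambda>(i, j). v i j) p)" for \<sigma> :: "_ \<Rightarrow> real"
      unfolding \<tau>_def sum.cartesian_product by (intro sum.cong) (auto simp: mult.commute)
    then show "avg (sign_vectors (I \<times> J)) (\<lambda>\<sigma>.
          (norm (\<Sum>i\<in>I. \<Sum>j\<in>J. (\<epsilon> i * \<delta> j) *\<^sub>R (\<sigma> (i, j) *\<^sub>R v i j)))\<^sup>2)
        = rad_sq (I \<times> J) (\<lambda>(i, j). v i j)"
      using rad_sq_sign_flip[OF \<tau>] by simp
  qed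
  also have "\<dots> = rad_sq (I \<times> J) (\<lambda>(i, j). v i j)"
    using assms by (simp add: avg_sign_vectors_const)
  finally show ?thesis .
qed

lemma rad_sq_le_rad2_sq:
  fixes v :: "'i \<Rightarrow> 'j \<Rightarrow> 'b::real_normed_vector"
  assumes I: "finite I" and J: "finite J"
    and sign: "\<And>(w :: 'i \<Rightarrow> 'j \<Rightarrow> 'b) \<sigma>. \<sigma> \<in> sign_vectors (I \<times> J) \<Longrightarrow>
      rad2_sq I J (\<lambda>i j. \<sigma> (i, j) *\<^sub>R w i j) \<le> K * rad2_sq I J w"
  shows "rad_sq (I \<times> J) (\<lambda>(i, j). v i j) \<le> K * rad2_sq I J v"
proof -
  have "rad_sq (I \<times> J) (\<lambda>(i, j). v i j)
      = avg (sign_vectors (I \<times> J)) (\<lambda>\<sigma>. rad2_sq I J (\<lambda>i j. \<sigma> (i, j) *\<^sub>R v i j))"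
    by (rule avg_rad2_sq_random_signs[OF I J, symmetric])
  also have "\<dots> \<le> avg (sign_vectors (I \<times> J)) (\<lambda>\<sigma>. K * rad2_sq I J v)"
    by (intro avg_mono) (rule sign)
  also have "\<dots> = K * rad2_sq I J v"
    using I J by (simp add: avg_sign_vectors_const)
  finally show ?thesis .
qed

lemma rad2_sq_le_rad_sq:
  fixes v :: "'i \<Rightarrow> 'j \<Rightarrow> 'b::real_normed_vector"
  assumes I: "finite I" and J: "finite J"
    and sign: "\<And>(w :: 'i \<Rightarrow> 'j \<Rightarrow> 'b) \<sigma>. \<sigma> \<in> sign_vectors (I \<times> J) \<Longrightarrow>
      rad2_sq I J (\<lambda>i j. \<sigma> (i, j) *\<^sub>R w i j) \<le> K * rad2_sq I J w"
  shows "rad2_sq I J v \<le> K * rad_sq (I \<times> J) (\<lambda>(i, j). v i j)"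
proof -
  have "rad2_sq I J v = avg (sign_vectors (I \<times> J)) (\<lambda>\<sigma>. rad2_sq I J v)"
    using I J by (simp add: avg_sign_vectors_const)
  also have "\<dots> \<le> avg (sign_vectors (I \<times> J)) (\<lambda>\<sigma>. K * rad2_sq I J (\<lambda>i j. \<sigma> (i, j) *\<^sub>R v i j))"
  proof (intro avg_mono)
    fix \<sigma> assume \<sigma>: "\<sigma> \<in> sign_vectors (I \<times> J)"
    have "rad2_sq I J v = rad2_sq I J (\<lambda>i j. \<sigma> (i, j) *\<^sub>R (\<sigma> (i, j) *\<^sub>R v i j))"
      using sign_vector_mult_self[OF \<sigma>] by (intro rad2_sq_cong) simp
    also have "\<dots> \<le> K * rad2_sq I J (\<lambda>i j. \<sigma> (i, j) *\<^sub>R v i j)"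
      using sign[of \<sigma> "\<lambda>i j. \<sigma> (i, j) *\<^sub>R v i j"] \<sigma> by simp
    finally show "rad2_sq I J v \<le> K * rad2_sq I J (\<lambda>i j. \<sigma> (i, j) *\<^sub>R v i j)" .
  qed
  also have "\<dots> = K * rad_sq (I \<times> J) (\<lambda>(i, j). v i j)"
    by (simp add: avg_mult_left avg_rad2_sq_random_signs[OF I J])
  finally show ?thesis .
qed

section \<open>Multi-indexed families and the norms \<open>N\<^sub>d\<close>\<close>

lemma finite_idx: "finite (idx d n)"
proof -
  have "idx d n = {xs. set xs \<subseteq> {..<n} \<and> length xs = d}"
    unfolding idx_def by auto
  then show ?thesis
    using finite_lists_length_eq[of "{..<n}" d] by simp
qed

lemma idx_0: "idx 0 n = {[]}"
  unfolding idx_def by auto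

lemma idx_Suc: "idx (Suc d) n = (\<lambda>(i, r). i # r) ` ({..<n} \<times> idx d n)"
proof (intro set_eqI iffI)
  fix l assume "l \<in> idx (Suc d) n"
  then obtain i r where "l = i # r" "i < n" "r \<in> idx d n"
    unfolding idx_def by (auto simp: length_Suc_conv)
  then show "l \<in> (\<lambda>(i, r). i # r) ` ({..<n} \<times> idx d n)"
    by force
qed (auto simp: idx_def)

lemma inj_on_Cons_pair: "inj_on (\<lambda>(i, r). i # r) A"
  by (auto simp: inj_on_def)

definition walsh :: "nat \<Rightarrow> (nat \<Rightarrow> nat \<Rightarrow> real) \<Rightarrow> nat list \<Rightarrow> real" where
  "walsh d \<epsilon> l = (\<Prod>k<d. \<epsilon> k (l ! k))"

lemma walsh_Cons: "walsh (Suc d) (case_nat e \<epsilon>) (i # r) = e i * walsh d \<epsilon> r"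
  unfolding walsh_def prod.lessThan_Suc_shift by simp

lemma signs_eq_PiE: "signs d n = PiE {..<d} (\<lambda>_. sign_vectors {..<n})"
  unfolding signs_def sign_vectors_def ..

lemma finite_signs: "finite (signs d n)"
  unfolding signs_eq_PiE by (intro finite_PiE) (auto intro: finite_sign_vectors)

lemma case_nat_in_PiE:
  assumes "e \<in> S" "\<epsilon> \<in> PiE {..<d} (\<lambda>_. S)"
  shows "case_nat e \<epsilon> \<in> PiE {..<Suc d} (\<lambda>_. S)"
proof -
  have "case_nat e \<epsilon> k \<in> S" if "k < Suc d" for k
    using assms that by (cases k) auto
  moreover have "case_nat e \<epsilon> k = undefined" if "\<not> k < Suc d" for k
    using assms that by (cases k) auto
  ultimately show ?thesis
    by (auto simp: PiE_iff extensional_def)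
qed

lemma signs_Suc_bij:
  "bij_betw (\<lambda>(e, \<epsilon>). case_nat e \<epsilon>) (sign_vectors {..<n} \<times> signs d n) (signs (Suc d) n)"
proof (rule bij_betwI[where g = "\<lambda>\<epsilon>. (\<epsilon> 0, \<epsilon> \<circ> Suc)"])
  show "(\<lambda>(e, \<epsilon>). case_nat e \<epsilon>) \<in> sign_vectors {..<n} \<times> signs d n \<rightarrow> signs (Suc d) n"
    unfolding signs_eq_PiE by (auto intro!: case_nat_in_PiE)
  show "(\<lambda>\<epsilon>. (\<epsilon> 0, \<epsilon> \<circ> Suc)) \<in> signs (Suc d) n \<rightarrow> sign_vectors {..<n} \<times> signs d n"
  proof
    fix \<epsilon> assume "\<epsilon> \<in> signs (Suc d) n"
    then have \<epsilon>: "\<epsilon> \<in> PiE {..<Suc d} (\<lambda>_. sign_vectors {..<n})"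
      unfolding signs_eq_PiE .
    have "\<epsilon> \<circ> Suc \<in> PiE {..<d} (\<lambda>_. sign_vectors {..<n})"
      using PiE_mem[OF \<epsilon>] PiE_arb[OF \<epsilon>] by (auto simp: PiE_iff extensional_def)
    then show "(\<epsilon> 0, \<epsilon> \<circ> Suc) \<in> sign_vectors {..<n} \<times> signs d n"
      using PiE_mem[OF \<epsilon>] unfolding signs_eq_PiE by simp
  qed
  show "(\<lambda>\<epsilon>. (\<epsilon> 0, \<epsilon> \<circ> Suc)) ((\<lambda>(e, \<epsilon>). case_nat e \<epsilon>) p) = p" for p
    by (cases p) auto
  show "(\<lambda>(e, \<epsilon>). case_nat e \<epsilon>) (\<epsilon> 0, \<epsilon> \<circ> Suc) = \<epsilon>" for \<epsilon> :: "nat \<Rightarrow> nat \<Rightarrow> real"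
    by (rule ext) (simp split: nat.split)
qed

lemma Nd_sq: "(Nd d n x)\<^sup>2 = avg (signs d n) (\<lambda>\<epsilon>. (norm (\<Sum>l\<in>idx d n. walsh d \<epsilon> l *\<^sub>R x l))\<^sup>2)"
  unfolding Nd_def avg_def walsh_def by (intro real_sqrt_pow2 divide_nonneg_nonneg sum_nonneg) auto

lemma Nd_nonneg: "0 \<le> Nd d n x"
  unfolding Nd_def by (intro real_sqrt_ge_zero divide_nonneg_nonneg sum_nonneg) auto

lemma Nd_0_sq: "(Nd 0 n x)\<^sup>2 = (norm (x []))\<^sup>2"
  by (simp add: Nd_sq idx_0 signs_def walsh_def avg_def)

lemma sum_idx_Suc:
  fixes x :: "nat list \<Rightarrow> 'a::real_vector"
  shows "(\<Sum>l\<in>idx (Suc d) n. walsh (Suc d) (case_nat e \<epsilon>) l *\<^sub>R x l)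
     = (\<Sum>r\<in>idx d n. walsh d \<epsilon> r *\<^sub>R (\<Sum>i<n. e i *\<^sub>R x (i # r)))"
proof -
  have "(\<Sum>l\<in>idx (Suc d) n. walsh (Suc d) (case_nat e \<epsilon>) l *\<^sub>R x l)
      = (\<Sum>(i, r)\<in>{..<n} \<times> idx d n. (e i * walsh d \<epsilon> r) *\<^sub>R x (i # r))"
    unfolding idx_Suc by (subst sum.reindex[OF inj_on_Cons_pair]) (simp add: case_prod_beta walsh_Cons)
  also have "\<dots> = (\<Sum>r\<in>idx d n. \<Sum>i<n. (e i * walsh d \<epsilon> r) *\<^sub>R x (i # r))"
    by (simp add: sum.cartesian_product[symmetric] sum.swap[of _ "{..<n}"])
  also have "\<dots> = (\<Sum>r\<in>idx d n. walsh d \<epsilon> r *\<^sub>R (\<Sum>i<n. e i *\<^sub>R x (i # r)))"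
    by (simp add: scaleR_sum_right mult.commute)
  finally show ?thesis .
qed

lemma Nd_Suc_sq:
  "(Nd (Suc d) n x)\<^sup>2 = avg (sign_vectors {..<n}) (\<lambda>e. (Nd d n (\<lambda>r. \<Sum>i<n. e i *\<^sub>R x (i # r)))\<^sup>2)"
proof -
  have "(Nd (Suc d) n x)\<^sup>2 = avg (sign_vectors {..<n} \<times> signs d n) (\<lambda>(e, \<epsilon>).
      (norm (\<Sum>l\<in>idx (Suc d) n. walsh (Suc d) (case_nat e \<epsilon>) l *\<^sub>R x l))\<^sup>2)"
    unfolding Nd_sq by (subst avg_reindex[OF signs_Suc_bij]) (simp add: case_prod_beta')
  also have "\<dots> = avg (sign_vectors {..<n}) (\<lambda>e. (Nd d n (\<lambda>r. \<Sum>i<n. e i *\<^sub>R x (i # r)))\<^sup>2)"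
    by (simp add: avg_Times finite_sign_vectors finite_signs sum_idx_Suc Nd_sq)
  finally show ?thesis .
qed

lemma Nd_2_sq: "(Nd 2 n x)\<^sup>2 = rad2_sq {..<n} {..<n} (\<lambda>i j. x [i, j])"
proof -
  have Nd_1_sq: "(Nd 1 n y)\<^sup>2 = rad_sq {..<n} (\<lambda>j. y [j])" for y :: "nat list \<Rightarrow> 'a"
    unfolding One_nat_def Nd_Suc_sq Nd_0_sq rad_sq_def ..
  show ?thesis
    unfolding Nd_Suc_sq[of 1, unfolded Suc_1] Nd_1_sq rad2_sq_eq_avg_rad_sq by simp
qed

lemma rad_sq_idx_0: "rad_sq (idx 0 n) x = (norm (x []))\<^sup>2"
  by (simp add: idx_0 rad_sq_singleton)

lemma rad_sq_idx_Suc: "rad_sq (idx (Suc d) n) x = rad_sq ({..<n} \<times> idx d n) (\<lambda>(i, r). x (i # r))"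
  unfolding idx_Suc rad_sq_reindex[OF inj_on_Cons_pair] by (rule rad_sq_cong) auto

section \<open>From property \<open>(\<alpha>)\<close> to bounded multipliers for every \<open>N\<^sub>d\<close>\<close>

definition has_alpha_constant :: "(complex \<Rightarrow> 'b::real_normed_vector \<Rightarrow> 'b) \<Rightarrow> real \<Rightarrow> bool" where
  "has_alpha_constant sc C \<longleftrightarrow> (\<forall>n (a :: nat list \<Rightarrow> complex) (x :: nat list \<Rightarrow> 'b).
      Nd 2 n (\<lambda>l. sc (a l) (x l)) \<le> C * (MAX l\<in>idx 2 n. cmod (a l)) * Nd 2 n x)"

lemma property_alpha_iff: "property_alpha sc \<longleftrightarrow> (\<exists>C. has_alpha_constant sc C)"
  unfolding property_alpha_def has_alpha_constant_def ..

text \<open>Property \<open>(\<alpha>)\<close> speaks about families indexed by \<open>{..<N} \<times> {..<N}\<close>; finite subsets of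
  countable types are embedded there by \<open>to_nat\<close>, extending by zero.\<close>

lemma rad2_sq_multiplier_le:
  fixes v :: "'i::countable \<Rightarrow> 'j::countable \<Rightarrow> 'b::real_normed_vector" and sc :: "complex \<Rightarrow> 'b \<Rightarrow> 'b"
  assumes alpha: "has_alpha_constant sc C" and sc_0: "\<And>w. sc 0 w = 0"
    and I: "finite I" and J: "finite J"
    and a_le: "\<And>i j. i \<in> I \<Longrightarrow> j \<in> J \<Longrightarrow> cmod (a i j) \<le> M" and "0 \<le> M"
  shows "rad2_sq I J (\<lambda>i j. sc (a i j) (v i j)) \<le> C\<^sup>2 * M\<^sup>2 * rad2_sq I J v"
proof -
  obtain k where k: "to_nat ` I \<union> to_nat ` J \<subseteq> {..<k}"
    using I J finite_nat_iff_bounded by blast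
  define N where "N = Suc k"
  have N: "to_nat ` I \<subseteq> {..<N}" "to_nat ` J \<subseteq> {..<N}"
    using k unfolding N_def by auto
  define a' where "a' i' j' = (if (i', j') \<in> to_nat ` I \<times> to_nat ` J
    then a (from_nat i') (from_nat j') else 0)" for i' j'
  define v' where "v' i' j' = (if (i', j') \<in> to_nat ` I \<times> to_nat ` J
    then v (from_nat i') (from_nat j') else 0)" for i' j'
  have v'_eq: "rad2_sq {..<N} {..<N} v' = rad2_sq I J v"
    using N by (intro rad2_sq_embed) (auto simp: v'_def)
  have av'_eq: "rad2_sq {..<N} {..<N} (\<lambda>i' j'. sc (a' i' j') (v' i' j'))
      = rad2_sq I J (\<lambda>i j. sc (a i j) (v i j))"
    using N by (intro rad2_sq_embed) (auto simp: a'_def v'_def sc_0)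
  define A where "A l = a' (l ! 0) (l ! 1)" for l
  define V where "V l = v' (l ! 0) (l ! 1)" for l
  define Mx where "Mx = (MAX l\<in>idx 2 N. cmod (A l))"
  have Mx_le: "Mx \<le> M"
  proof -
    have "idx 2 N \<noteq> {}"
      unfolding idx_def N_def by (auto intro: exI[of _ "[0, 0]"])
    moreover have "cmod (A l) \<le> M" for l
      using a_le \<open>0 \<le> M\<close> by (auto simp: A_def a'_def)
    ultimately show ?thesis
      unfolding Mx_def by (intro Max.boundedI) (auto simp: finite_idx)
  qed
  have "cmod (A [0, 0]) \<le> Mx"
    unfolding Mx_def using finite_idx by (intro Max_ge) (auto simp: idx_def N_def)
  then have Mx_nonneg: "0 \<le> Mx"
    using norm_ge_zero order.trans by blast
  have "rad2_sq I J (\<lambda>i j. sc (a i j) (v i j)) = (Nd 2 N (\<lambda>l. sc (A l) (V l)))\<^sup>2"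
    by (simp add: Nd_2_sq A_def V_def av'_eq)
  also have "\<dots> \<le> (C * Mx * Nd 2 N V)\<^sup>2"
    using alpha Nd_nonneg unfolding has_alpha_constant_def Mx_def by (intro power_mono) auto
  also have "\<dots> \<le> C\<^sup>2 * M\<^sup>2 * (Nd 2 N V)\<^sup>2"
    unfolding power_mult_distrib using Mx_nonneg Mx_le
    by (intro mult_right_mono mult_left_mono power_mono) auto
  also have "\<dots> = C\<^sup>2 * M\<^sup>2 * rad2_sq I J v"
    by (simp add: Nd_2_sq V_def v'_eq)
  finally show ?thesis .
qed

lemma rad_sq_multiplier_le:
  fixes u :: "'i::countable \<Rightarrow> 'b::real_normed_vector" and sc :: "complex \<Rightarrow> 'b \<Rightarrow> 'b"
  assumes "has_alpha_constant sc C" "\<And>w. sc 0 w = 0" "finite I"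
    and "\<And>i. i \<in> I \<Longrightarrow> cmod (a i) \<le> M" "0 \<le> M"
  shows "rad_sq I (\<lambda>i. sc (a i) (u i)) \<le> C\<^sup>2 * M\<^sup>2 * rad_sq I u"
  using rad2_sq_multiplier_le[of sc C I "{()}" "\<lambda>i _. a i" M "\<lambda>i _. u i"] assms
  by (simp add: rad2_sq_singleton)

lemma rad2_sq_sign_multiplier_le:
  fixes w :: "'i::countable \<Rightarrow> 'j::countable \<Rightarrow> 'b::real_normed_vector" and sc :: "complex \<Rightarrow> 'b \<Rightarrow> 'b"
  assumes "has_alpha_constant sc C" and sc_real: "\<And>r w. sc (of_real r) w = r *\<^sub>R w"
    and "finite I" "finite J" and \<sigma>: "\<sigma> \<in> sign_vectors (I \<times> J)"
  shows "rad2_sq I J (\<lambda>i j. \<sigma> (i, j) *\<^sub>R w i j) \<le> C\<^sup>2 * rad2_sq I J w"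
  using rad2_sq_multiplier_le[of sc C I J "\<lambda>i j. of_real (\<sigma> (i, j))" 1 w] assms
    sc_real[of 0] sign_vector_abs[OF \<sigma>]
  by simp

lemma Nd_sq_le_rad_sq:
  fixes x :: "nat list \<Rightarrow> 'b::real_normed_vector"
  assumes rad2_le: "\<And>n d (v :: nat \<Rightarrow> nat list \<Rightarrow> 'b).
      rad2_sq {..<n} (idx d n) v \<le> K * rad_sq ({..<n} \<times> idx d n) (\<lambda>(i, r). v i r)"
    and "0 \<le> K"
  shows "(Nd d n x)\<^sup>2 \<le> K ^ d * rad_sq (idx d n) x"
proof (induction d arbitrary: x)
  case 0
  then show ?case
    by (simp add: Nd_0_sq rad_sq_idx_0)
next
  case (Suc d)
  have "(Nd (Suc d) n x)\<^sup>2
      = avg (sign_vectors {..<n}) (\<lambda>e. (Nd d n (\<lambda>r. \<Sum>i<n. e i *\<^sub>R x (i # r)))\<^sup>2)"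
    by (rule Nd_Suc_sq)
  also have "\<dots> \<le> avg (sign_vectors {..<n}) (\<lambda>e. K ^ d * rad_sq (idx d n) (\<lambda>r. \<Sum>i<n. e i *\<^sub>R x (i # r)))"
    by (intro avg_mono Suc.IH)
  also have "\<dots> = K ^ d * rad2_sq {..<n} (idx d n) (\<lambda>i r. x (i # r))"
    by (simp add: avg_mult_left rad2_sq_eq_avg_rad_sq)
  also have "\<dots> \<le> K ^ d * (K * rad_sq ({..<n} \<times> idx d n) (\<lambda>(i, r). x (i # r)))"
    using \<open>0 \<le> K\<close> by (intro mult_left_mono rad2_le) simp
  also have "\<dots> = K ^ Suc d * rad_sq (idx (Suc d) n) x"
    by (simp add: rad_sq_idx_Suc)
  finally show ?case .
qed

lemma rad_sq_le_Nd_sq: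
  fixes x :: "nat list \<Rightarrow> 'b::real_normed_vector"
  assumes rad_le: "\<And>n d (v :: nat \<Rightarrow> nat list \<Rightarrow> 'b).
      rad_sq ({..<n} \<times> idx d n) (\<lambda>(i, r). v i r) \<le> K * rad2_sq {..<n} (idx d n) v"
    and "0 \<le> K"
  shows "rad_sq (idx d n) x \<le> K ^ d * (Nd d n x)\<^sup>2"
proof (induction d arbitrary: x)
  case 0
  then show ?case
    by (simp add: Nd_0_sq rad_sq_idx_0)
next
  case (Suc d)
  have "rad_sq (idx (Suc d) n) x = rad_sq ({..<n} \<times> idx d n) (\<lambda>(i, r). x (i # r))"
    by (rule rad_sq_idx_Suc)
  also have "\<dots> \<le> K * rad2_sq {..<n} (idx d n) (\<lambda>i r. x (i # r))"
    using rad_le by simp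
  also have "\<dots> = K * avg (sign_vectors {..<n}) (\<lambda>e. rad_sq (idx d n) (\<lambda>r. \<Sum>i<n. e i *\<^sub>R x (i # r)))"
    by (simp add: rad2_sq_eq_avg_rad_sq)
  also have "\<dots> \<le> K * avg (sign_vectors {..<n}) (\<lambda>e. K ^ d * (Nd d n (\<lambda>r. \<Sum>i<n. e i *\<^sub>R x (i # r)))\<^sup>2)"
    using \<open>0 \<le> K\<close> by (intro mult_left_mono avg_mono Suc.IH)
  also have "\<dots> = K ^ Suc d * (Nd (Suc d) n x)\<^sup>2"
    by (simp add: avg_mult_left Nd_Suc_sq)
  finally show ?case .
qed

lemma Nd_multiplier_le:
  fixes x :: "nat list \<Rightarrow> 'b::real_normed_vector" and sc :: "complex \<Rightarrow> 'b \<Rightarrow> 'b"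
  assumes alpha: "has_alpha_constant sc C" and sc_real: "\<And>r w. sc (of_real r) w = r *\<^sub>R w"
    and a_le: "\<And>l. l \<in> idx d n \<Longrightarrow> cmod (a l) \<le> M" and "0 \<le> M"
  shows "Nd d n (\<lambda>l. sc (a l) (x l)) \<le> (C\<^sup>2) ^ d * \<bar>C\<bar> * M * Nd d n x"
proof -
  have sign: "rad2_sq {..<m} (idx k m) (\<lambda>i r. \<sigma> (i, r) *\<^sub>R w i r) \<le> C\<^sup>2 * rad2_sq {..<m} (idx k m) w"
    if "\<sigma> \<in> sign_vectors ({..<m} \<times> idx k m)" for m k \<sigma> and w :: "nat \<Rightarrow> nat list \<Rightarrow> 'b"
    using that by (intro rad2_sq_sign_multiplier_le[OF alpha sc_real]) (simp_all add: finite_idx)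
  have Nd_le: "(Nd d n y)\<^sup>2 \<le> (C\<^sup>2) ^ d * rad_sq (idx d n) y" for y :: "nat list \<Rightarrow> 'b"
    using sign by (intro Nd_sq_le_rad_sq rad2_sq_le_rad_sq) (simp_all add: finite_idx)
  have rad_le: "rad_sq (idx d n) y \<le> (C\<^sup>2) ^ d * (Nd d n y)\<^sup>2" for y :: "nat list \<Rightarrow> 'b"
    using sign by (intro rad_sq_le_Nd_sq rad_sq_le_rad2_sq) (simp_all add: finite_idx)
  have "(Nd d n (\<lambda>l. sc (a l) (x l)))\<^sup>2 \<le> (C\<^sup>2) ^ d * rad_sq (idx d n) (\<lambda>l. sc (a l) (x l))"
    by (rule Nd_le)
  also have "\<dots> \<le> (C\<^sup>2) ^ d * (C\<^sup>2 * M\<^sup>2 * rad_sq (idx d n) x)"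
    using a_le \<open>0 \<le> M\<close> sc_real[of 0]
    by (intro mult_left_mono rad_sq_multiplier_le[OF alpha]) (simp_all add: finite_idx)
  also have "\<dots> \<le> (C\<^sup>2) ^ d * (C\<^sup>2 * M\<^sup>2 * ((C\<^sup>2) ^ d * (Nd d n x)\<^sup>2))"
    by (intro mult_left_mono rad_le) simp_all
  also have "\<dots> = ((C\<^sup>2) ^ d * \<bar>C\<bar> * M * Nd d n x)\<^sup>2"
    unfolding power_mult_distrib power2_abs by algebra
  finally have "(Nd d n (\<lambda>l. sc (a l) (x l)))\<^sup>2 \<le> ((C\<^sup>2) ^ d * \<bar>C\<bar> * M * Nd d n x)\<^sup>2" .
  moreover have "0 \<le> (C\<^sup>2) ^ d * \<bar>C\<bar> * M * Nd d n x"
    using \<open>0 \<le> M\<close> Nd_nonneg[of d n x] by (intro mult_nonneg_nonneg) auto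
  ultimately show ?thesis
    by (rule power2_le_imp_le)
qed

text \<open>The \<open>d\<close>-fold analogue of \<open>(\<alpha>)\<close>, which is the case \<open>d = 2\<close> up to \<open>K > 0\<close>.\<close>

definition bounded_multipliers :: "(complex \<Rightarrow> 'b::real_normed_vector \<Rightarrow> 'b) \<Rightarrow> nat \<Rightarrow> bool" where
  "bounded_multipliers sc d \<longleftrightarrow> (\<exists>K>0. \<forall>n (a :: nat list \<Rightarrow> complex) (x :: nat list \<Rightarrow> 'b).
      Nd d n (\<lambda>l. sc (a l) (x l)) \<le> K * (MAX l\<in>idx d n. cmod (a l)) * Nd d n x)"

lemma bounded_multipliers_if_property_alpha:
  fixes sc :: "complex \<Rightarrow> 'b::real_normed_vector \<Rightarrow> 'b"
  assumes "property_alpha sc" and sc_real: "\<And>r w. sc (of_real r) w = r *\<^sub>R w"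
  shows "bounded_multipliers sc d"
proof -
  obtain C where alpha: "has_alpha_constant sc C"
    using assms(1) property_alpha_iff by blast
  define K where "K = (C\<^sup>2) ^ d * \<bar>C\<bar> + 1"
  have "Nd d n (\<lambda>l. sc (a l) (x l)) \<le> K * (MAX l\<in>idx d n. cmod (a l)) * Nd d n x"
    for n a and x :: "nat list \<Rightarrow> 'b"
  proof (cases "idx d n = {}")
    case True
    then show ?thesis
      by (simp add: Nd_def)
  next
    case False
    define M where "M = (MAX l\<in>idx d n. cmod (a l))"
    have a_le: "cmod (a l) \<le> M" if "l \<in> idx d n" for l
      unfolding M_def using finite_idx that by (intro Max_ge) auto
    then have "0 \<le> M"
      using False norm_ge_zero order.trans by blast
    have "Nd d n (\<lambda>l. sc (a l) (x l)) \<le> (C\<^sup>2) ^ d * \<bar>C\<bar> * M * Nd d n x"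
      by (rule Nd_multiplier_le[OF alpha sc_real a_le \<open>0 \<le> M\<close>])
    also have "\<dots> \<le> K * M * Nd d n x"
      unfolding K_def using \<open>0 \<le> M\<close> Nd_nonneg by (intro mult_right_mono) auto
    finally show ?thesis
      unfolding M_def .
  qed
  moreover have "0 < K"
    unfolding K_def by (simp add: add_nonneg_pos)
  ultimately show ?thesis
    unfolding bounded_multipliers_def by blast
qed

section \<open>Duality\<close>

lemma complex_structure_linear: "complex_structure J \<Longrightarrow> linear J"
  unfolding complex_structure_def by blast

lemma complex_structure_J_J: "complex_structure J \<Longrightarrow> J (J x) = - x"
  unfolding complex_structure_def by blast

lemma norm_scC_unit:
  assumes "complex_structure J" "cmod c = 1"
  shows "norm (scC J c x) = norm x"
proof -
  have "(Re c)\<^sup>2 + (Im c)\<^sup>2 = 1"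
    using assms(2) by (simp add: cmod_def)
  then obtain t where "Re c = cos t" "Im c = sin t"
    using sincos_total_2pi by metis
  then show ?thesis
    using assms(1) unfolding complex_structure_def scC_def by simp
qed

lemma complex_structure_bounded_linear:
  assumes "complex_structure J"
  shows "bounded_linear J"
proof -
  have "norm (J x) = norm x" for x
    using norm_scC_unit[OF assms, of \<i> x] by (simp add: scC_def)
  then show ?thesis
    using complex_structure_linear[OF assms]
    by (intro bounded_linear_intro[where K = 1]) (auto simp: linear_add linear_cmul)
qed

lemma dualJ_apply: "complex_structure J \<Longrightarrow> dualJ J g x = g (J x)"
  unfolding dualJ_def
  by (subst bounded_linear_Blinfun_apply)
     (auto intro: bounded_linear_compose[OF blinfun.bounded_linear_right complex_structure_bounded_linear])

lemma cpair_scC: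
  assumes "complex_structure J"
  shows "cpair J g (scC J c x) = c * cpair J g x"
proof -
  have "J (scC J c x) = Re c *\<^sub>R J x - Im c *\<^sub>R x"
    unfolding scC_def using complex_structure_linear[OF assms]
    by (simp add: linear_add linear_cmul complex_structure_J_J[OF assms])
  then show ?thesis
    unfolding cpair_def scC_def
    by (simp add: blinfun.add_right blinfun.scaleR_right blinfun.diff_right complex_eq_iff)
qed

lemma cpair_dualJ_scC:
  assumes "complex_structure J"
  shows "cpair J (scC (dualJ J) c g) x = c * cpair J g x"
  unfolding cpair_def scC_def
  by (simp add: blinfun.add_left blinfun.scaleR_left dualJ_apply[OF assms]
      complex_structure_J_J[OF assms] blinfun.minus_right complex_eq_iff)

text \<open>Rotating \<open>x\<close> by the conjugate phase of the pairing makes the pairing real and equal to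
  \<open>g\<close> applied to a vector of norm \<open>norm x\<close>.\<close>

lemma norm_cpair_le:
  assumes "complex_structure J"
  shows "cmod (cpair J g x) \<le> norm g * norm x"
proof (cases "cpair J g x = 0")
  case True
  then show ?thesis
    by simp
next
  case False
  define z where "z = cpair J g x"
  define c where "c = cnj z / cmod z"
  have "cmod c = 1"
    using False by (simp add: c_def z_def norm_divide)
  have "c * z = cnj z * z / cmod z"
    by (simp add: c_def)
  also have "\<dots> = of_real (cmod z)"
    using False by (simp add: z_def power2_eq_square mult.commute flip: complex_norm_square)
  finally have "cpair J g (scC J c x) = of_real (cmod z)"
    by (simp add: cpair_scC[OF assms] z_def)
  then have "cmod z = g (scC J c x)"
    unfolding cpair_def by (simp add: complex_eq_iff)
  also have "\<dots> \<le> norm g * norm (scC J c x)"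
    using norm_blinfun[of g "scC J c x"] by simp
  also have "\<dots> = norm g * norm x"
    by (simp add: norm_scC_unit[OF assms \<open>cmod c = 1\<close>])
  finally show ?thesis
    unfolding z_def .
qed

lemma cpair_scaleR_sum_left:
  "cpair J (\<Sum>m\<in>S. c m *\<^sub>R g m) x = (\<Sum>m\<in>S. of_real (c m) * cpair J (g m) x)"
  unfolding cpair_def
  by (simp add: blinfun.sum_left blinfun.scaleR_left complex_eq_iff sum_negf)

lemma cpair_scaleR_sum_right:
  assumes "complex_structure J"
  shows "cpair J g (\<Sum>l\<in>S. c l *\<^sub>R x l) = (\<Sum>l\<in>S. of_real (c l) * cpair J g (x l))"
  unfolding cpair_def using complex_structure_linear[OF assms]
  by (simp add: linear_sum linear_cmul blinfun.sum_right blinfun.scaleR_right complex_eq_iff sum_negf)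

lemma sum_walsh_mult:
  assumes l: "l \<in> idx d n" and m: "m \<in> idx d n"
  shows "(\<Sum>\<epsilon>\<in>signs d n. walsh d \<epsilon> l * walsh d \<epsilon> m) = (if l = m then real (card (signs d n)) else 0)"
proof -
  have len: "length l = d" "length m = d" and sets: "set l \<subseteq> {..<n}" "set m \<subseteq> {..<n}"
    using l m by (auto simp: idx_def)
  have nth_lt: "l ! k < n" "m ! k < n" if "k < d" for k
    using len sets that nth_mem by (metis lessThan_iff subsetD)+
  have "(\<Sum>\<epsilon>\<in>signs d n. walsh d \<epsilon> l * walsh d \<epsilon> m)
      = (\<Prod>k<d. \<Sum>e\<in>sign_vectors {..<n}. e (l ! k) * e (m ! k))"
    unfolding signs_eq_PiE walsh_def prod.distrib[symmetric]
    by (rule prod_sum_PiE[symmetric]) (auto intro: finite_sign_vectors)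
  also have "\<dots> = (\<Prod>k<d. if l ! k = m ! k then real (card (sign_vectors {..<n})) else 0)"
    by (intro prod.cong refl) (simp add: sum_sign_vectors_mult nth_lt)
  also have "\<dots> = (if l = m then real (card (signs d n)) else 0)"
  proof (cases "l = m")
    case True
    then show ?thesis
      by (simp add: signs_eq_PiE card_PiE)
  next
    case False
    then obtain k where k: "k < d" "l ! k \<noteq> m ! k"
      using len nth_equalityI by metis
    have "(\<Prod>k<d. if l ! k = m ! k then real (card (sign_vectors {..<n})) else 0) = 0"
      using k by (intro prod_zero) auto
    then show ?thesis
      using False by simp
  qed
  finally show ?thesis .
qed

lemma sum_signs_cpair_walsh:
  assumes "complex_structure J"
  shows "(\<Sum>\<epsilon>\<in>signs d n. cpair J (\<Sum>m\<in>idx d n. walsh d \<epsilon> m *\<^sub>R g m) (\<Sum>l\<in>idx d n. walsh d \<epsilon> l *\<^sub>R x l))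
       = of_real (card (signs d n)) * (\<Sum>l\<in>idx d n. cpair J (g l) (x l))"
proof -
  let ?S = "signs d n" and ?I = "idx d n"
  have "(\<Sum>\<epsilon>\<in>?S. cpair J (\<Sum>m\<in>?I. walsh d \<epsilon> m *\<^sub>R g m) (\<Sum>l\<in>?I. walsh d \<epsilon> l *\<^sub>R x l))
      = (\<Sum>m\<in>?I. \<Sum>l\<in>?I. of_real (\<Sum>\<epsilon>\<in>?S. walsh d \<epsilon> m * walsh d \<epsilon> l) * cpair J (g m) (x l))"
    by (simp add: cpair_scaleR_sum_left cpair_scaleR_sum_right[OF assms] sum_distrib_left
        sum_distrib_right mult.assoc sum.swap[of _ ?S])
  also have "\<dots> = (\<Sum>m\<in>?I. \<Sum>l\<in>?I. if m = l then of_real (card ?S) * cpair J (g m) (x l) else 0)"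
    by (intro sum.cong refl) (simp add: sum_walsh_mult)
  also have "\<dots> = of_real (card ?S) * (\<Sum>l\<in>?I. cpair J (g l) (x l))"
    by (simp add: finite_idx sum_distrib_left)
  finally show ?thesis .
qed

lemma norm_sum_cpair_le_Nd:
  assumes "complex_structure J"
  shows "cmod (\<Sum>l\<in>idx d n. cpair J (g l) (x l)) \<le> Nd d n g * Nd d n x"
proof -
  define c where "c = real (card (signs d n))"
  have "0 < c"
    unfolding c_def using finite_signs signs_eq_PiE
    by (simp add: card_gt_0_iff PiE_eq_empty_iff sign_vectors_nonempty)
  define G where "G \<epsilon> = (\<Sum>m\<in>idx d n. walsh d \<epsilon> m *\<^sub>R g m)" for \<epsilon>
  define X where "X \<epsilon> = (\<Sum>l\<in>idx d n. walsh d \<epsilon> l *\<^sub>R x l)" for \<epsilon>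
  have "c * cmod (\<Sum>l\<in>idx d n. cpair J (g l) (x l)) = cmod (\<Sum>\<epsilon>\<in>signs d n. cpair J (G \<epsilon>) (X \<epsilon>))"
    using \<open>0 < c\<close> unfolding G_def X_def sum_signs_cpair_walsh[OF assms] norm_mult c_def by simp
  also have "\<dots> \<le> (\<Sum>\<epsilon>\<in>signs d n. norm (G \<epsilon>) * norm (X \<epsilon>))"
    by (intro order.trans[OF norm_sum] sum_mono norm_cpair_le[OF assms])
  also have "\<dots> \<le> sqrt (\<Sum>\<epsilon>\<in>signs d n. (norm (G \<epsilon>))\<^sup>2) * sqrt (\<Sum>\<epsilon>\<in>signs d n. (norm (X \<epsilon>))\<^sup>2)"
    using L2_set_mult_ineq[of "\<lambda>\<epsilon>. norm (G \<epsilon>)" "\<lambda>\<epsilon>. norm (X \<epsilon>)" "signs d n"]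
    by (simp add: L2_set_def)
  also have "\<dots> = c * (Nd d n g * Nd d n x)"
  proof -
    have "sqrt (\<Sum>\<epsilon>\<in>signs d n. (norm (G \<epsilon>))\<^sup>2) = sqrt c * Nd d n g"
      and "sqrt (\<Sum>\<epsilon>\<in>signs d n. (norm (X \<epsilon>))\<^sup>2) = sqrt c * Nd d n x"
      using \<open>0 < c\<close> unfolding Nd_def G_def X_def walsh_def c_def by (simp_all add: real_sqrt_divide)
    moreover have "sqrt c * sqrt c = c"
      using \<open>0 < c\<close> by simp
    ultimately show ?thesis
      by (metis mult.assoc mult.left_commute)
  qed
  finally show ?thesis
    using \<open>0 < c\<close> by simp
qed

lemma property_A_if_bounded_multipliers:
  fixes J :: "'a::real_normed_vector \<Rightarrow> 'a"
  assumes cs: "complex_structure J" and "bounded_multipliers (scC J) d"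
  shows "property_A J d"
proof -
  obtain K where "K > 0" and K: "\<And>n a (x :: nat list \<Rightarrow> 'a).
      Nd d n (\<lambda>l. scC J (a l) (x l)) \<le> K * (MAX l\<in>idx d n. cmod (a l)) * Nd d n x"
    using assms(2) unfolding bounded_multipliers_def by blast
  have "cmod (\<Sum>l\<in>idx d n. a l * cpair J (xs l) (x l))
      \<le> K * (MAX l\<in>idx d n. cmod (a l)) * Nd d n x * Nd d n xs" for n a x xs
  proof -
    have "cmod (\<Sum>l\<in>idx d n. a l * cpair J (xs l) (x l))
        = cmod (\<Sum>l\<in>idx d n. cpair J (xs l) (scC J (a l) (x l)))"
      by (simp add: cpair_scC[OF cs])
    also have "\<dots> \<le> Nd d n xs * Nd d n (\<lambda>l. scC J (a l) (x l))"
      by (rule norm_sum_cpair_le_Nd[OF cs])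
    also have "\<dots> \<le> Nd d n xs * (K * (MAX l\<in>idx d n. cmod (a l)) * Nd d n x)"
      by (intro mult_left_mono K Nd_nonneg)
    finally show ?thesis
      by (simp add: mult_ac)
  qed
  then show ?thesis
    unfolding property_A_def using \<open>K > 0\<close> by blast
qed

lemma property_A_if_dual_bounded_multipliers:
  fixes J :: "'a::real_normed_vector \<Rightarrow> 'a"
  assumes cs: "complex_structure J" and "bounded_multipliers (scC (dualJ J)) d"
  shows "property_A J d"
proof -
  obtain K where "K > 0" and K: "\<And>n a (xs :: nat list \<Rightarrow> 'a \<Rightarrow>\<^sub>L real).
      Nd d n (\<lambda>l. scC (dualJ J) (a l) (xs l)) \<le> K * (MAX l\<in>idx d n. cmod (a l)) * Nd d n xs"
    using assms(2) unfolding bounded_multipliers_def by blast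
  have "cmod (\<Sum>l\<in>idx d n. a l * cpair J (xs l) (x l))
      \<le> K * (MAX l\<in>idx d n. cmod (a l)) * Nd d n x * Nd d n xs" for n a x xs
  proof -
    have "cmod (\<Sum>l\<in>idx d n. a l * cpair J (xs l) (x l))
        = cmod (\<Sum>l\<in>idx d n. cpair J (scC (dualJ J) (a l) (xs l)) (x l))"
      by (simp add: cpair_dualJ_scC[OF cs])
    also have "\<dots> \<le> Nd d n (\<lambda>l. scC (dualJ J) (a l) (xs l)) * Nd d n x"
      by (rule norm_sum_cpair_le_Nd[OF cs])
    also have "\<dots> \<le> K * (MAX l\<in>idx d n. cmod (a l)) * Nd d n xs * Nd d n x"
      by (intro mult_right_mono K Nd_nonneg)
    finally show ?thesis
      by (simp add: mult_ac)
  qed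
  then show ?thesis
    unfolding property_A_def using \<open>K > 0\<close> by blast
qed

text \<open>The argument gives \<open>(A\<^sub>d)\<close> for every \<open>d\<close>.\<close>

theorem proposition3p4:
  fixes J :: "'a::banach \<Rightarrow> 'a" and d :: nat
  assumes "complex_structure J"
    and "property_alpha (scC J) \<or> property_alpha (scC (dualJ J))"
    and "d \<ge> 2"
  shows "property_A J d"
  using assms(2)
proof
  assume "property_alpha (scC J)"
  then show ?thesis
    by (intro property_A_if_bounded_multipliers[OF assms(1)] bounded_multipliers_if_property_alpha)
       (simp_all add: scC_def)
next
  assume "property_alpha (scC (dualJ J))"
  then show ?thesis
    by (intro property_A_if_dual_bounded_multipliers[OF assms(1)] bounded_multipliers_if_property_alpha)
       (simp_all add: scC_def)
qed

end
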